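(* Let $\beta>1$ and suppose there exists $t>0$ such that the driving distance ball $\{x\in\mathbb{T}:T(\varnothing,x)\le t\}$ is finite almost surely. Then almost surely every infinite geodesic path $(\varnothing=x_0,x_1,\dots)$ satisfies $\sum_{n\ge1}T(x_{n-1},x_n)=\infty$; that is, $T(\varnothing,\partial\mathbb{T})=\infty$ almost surely.
   Context: $\mathbb{T}$ is the $3$-regular tree with graph distance $d$ and root $\varnothing$. A line is the vertex set of a bi-infinite geodesic, and $\mathbb{L}$ is the set of lines. $\mu$ is the unique automorphism-invariant Borel measure on $\mathbb{L}$ with $\mu\{\ell\ni x,y\}=2^{-d(x,y)}$ for $x\neq y$. $\Pi$ is a Poisson process on $\mathbb{L}\times(0,\infty)$ with intensity $(\beta-1)\mu\otimes v^{-\beta}\mathrm{d}v$; its atoms are roads $(\ell,v)$ with speed $v$. For an edge $e$, $V_e$ is the largest speed of a road whose line contains $e$. $T(x,y)=\sum V_e^{-1}$ over the edges $e$ of the geodesic from $x$ to $y$. $T(\varnothing,\partial\mathbb{T})$ is the infimum, over rays $(\varnothing=x_0,x_1,\dots)$, of $\sum_{n\ge1}T(x_{n-1},x_n)$. *)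

theory Defs
  imports "HOL-Probability.Probability"
begin

text \<open>Model: vertices are reduced words over the letters 0,1,2 (Cayley graph of
  the free product of three copies of Z/2); the root is the empty word and
  the neighbours of x are the words obtained by appending or deleting one letter.\<close>

definition TV :: "nat list set" where
  "TV = {xs. set xs \<subseteq> {0,1,2} \<and> (\<forall>i. Suc i < length xs \<longrightarrow> xs ! i \<noteq> xs ! Suc i)}"

definition troot :: "nat list" where "troot = []"

fun lcp :: "nat list \<Rightarrow> nat list \<Rightarrow> nat" where
  "lcp (a # xs) (b # ys) = (if a = b then Suc (lcp xs ys) else 0)"
| "lcp _ _ = 0"

definition tdist :: "nat list \<Rightarrow> nat list \<Rightarrow> nat" where
  "tdist x y = length x + length y - 2 * lcp x y"

definition geo_edges :: "nat list \<Rightarrow> nat list \<Rightarrow> nat list set set" where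
  "geo_edges x y =
     {{take k x, take (Suc k) x} | k. lcp x y \<le> k \<and> k < length x}
   \<union> {{take k y, take (Suc k) y} | k. lcp x y \<le> k \<and> k < length y}"

definition lines :: "nat list set set" where
  "lines = {range f | f :: int \<Rightarrow> nat list.
              (\<forall>i. f i \<in> TV) \<and> (\<forall>i j. tdist (f i) (f j) = nat \<bar>i - j\<bar>)}"

definition root_ray :: "(nat \<Rightarrow> nat list) \<Rightarrow> bool" where
  "root_ray x \<longleftrightarrow> x 0 = troot \<and> (\<forall>n. x n \<in> TV) \<and>
     (\<forall>i j. tdist (x i) (x j) = (if i \<le> j then j - i else i - j))"

definition tree_aut :: "(nat list \<Rightarrow> nat list) \<Rightarrow> bool" where
  "tree_aut \<phi> \<longleftrightarrow> bij_betw \<phi> TV TV \<and> (\<forall>x\<in>TV. \<forall>y\<in>TV. tdist (\<phi> x) (\<phi> y) = tdist x y)"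

definition line_sets :: "nat list set set set" where
  "line_sets = sigma_sets lines {{l \<in> lines. x \<in> l} | x. x \<in> TV}"

definition line_measure :: "nat list set measure \<Rightarrow> bool" where
  "line_measure \<mu> \<longleftrightarrow> space \<mu> = lines \<and> sets \<mu> = line_sets \<and>
     (\<forall>\<phi>. tree_aut \<phi> \<longrightarrow> (\<forall>A\<in>sets \<mu>.
         emeasure \<mu> ((\<lambda>l. \<phi> ` l) -` A \<inter> lines) = emeasure \<mu> A)) \<and>
     (\<forall>x\<in>TV. \<forall>y\<in>TV. x \<noteq> y \<longrightarrow>
         emeasure \<mu> {l \<in> lines. x \<in> l \<and> y \<in> l} = ennreal ((1/2) ^ tdist x y))"

definition road_intensity :: "nat list set measure \<Rightarrow> real \<Rightarrow> (nat list set \<times> real) measure" where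
  "road_intensity \<mu> \<beta> = density (\<mu> \<Otimes>\<^sub>M lborel)
      (\<lambda>(l, v). if 0 < v then ennreal ((\<beta> - 1) * v powr (- \<beta>)) else 0)"

definition poisson_process :: "'w measure \<Rightarrow> 's measure \<Rightarrow> ('w \<Rightarrow> 's set) \<Rightarrow> bool" where
  "poisson_process M I Roads \<longleftrightarrow> prob_space M \<and>
     (\<forall>\<omega>\<in>space M. Roads \<omega> \<subseteq> space I) \<and>
     (\<forall>A\<in>sets I. emeasure I A < \<infinity> \<longrightarrow>
        (AE \<omega> in M. finite (Roads \<omega> \<inter> A)) \<and>
        (\<forall>k::nat. measure M {\<omega> \<in> space M. card (Roads \<omega> \<inter> A) = k}
            = exp (- measure I A) * measure I A ^ k / fact k)) \<and>
     (\<forall>(n::nat) (A :: nat \<Rightarrow> 's set).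
        (\<forall>i<n. A i \<in> sets I \<and> emeasure I (A i) < \<infinity>) \<and>
        (\<forall>i<n. \<forall>j<n. i \<noteq> j \<longrightarrow> A i \<inter> A j = {}) \<longrightarrow>
        prob_space.indep_vars M (\<lambda>_. count_space (UNIV :: nat set))
           (\<lambda>i \<omega>. card (Roads \<omega> \<inter> A i)) {..<n})"

definition edge_speed :: "('w \<Rightarrow> (nat list set \<times> real) set) \<Rightarrow> 'w \<Rightarrow> nat list set \<Rightarrow> ennreal" where
  "edge_speed Roads \<omega> e = (SUP r \<in> {r \<in> Roads \<omega>. e \<subseteq> fst r}. ennreal (snd r))"

definition drive_time :: "('w \<Rightarrow> (nat list set \<times> real) set) \<Rightarrow> 'w \<Rightarrow> nat list \<Rightarrow> nat list \<Rightarrow> ennreal" where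
  "drive_time Roads \<omega> x y = (\<Sum>e\<in>geo_edges x y. inverse (edge_speed Roads \<omega> e))"

end

theory Submission
  imports Defs
begin

text \<open>Suppose some ray from the root had finite total driving time. Then its tail beyond
  some vertex \<open>u = x\<^sub>N\<close> costs less than \<open>t\<close>, so the driving-distance ball of radius \<open>t\<close>
  around \<open>u\<close> contains the infinitely many later vertices of the ray. Left multiplication by
  \<open>u\<^sup>-\<^sup>1\<close> is a tree automorphism moving \<open>u\<close> to the root; it preserves \<open>\<mu>\<close> and hence the
  intensity, so the moved road process is again a Poisson process with the same intensity.
  The law of a Poisson process is determined by its counts on the countably many sets
  "lines through the edge \<open>e\<close> with speed above \<open>q\<close>" (\<open>q\<close> rational), and finiteness of the
  ball around the root is an event in these counts. So almost surely the ball of radius \<open>t\<close>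
  around every vertex is finite, which rules out a ray of finite driving time.\<close>

section \<open>The tree\<close>

lemma lcp_le_length: "lcp x y \<le> length x" "lcp x y \<le> length y"
  by (induction x y rule: lcp.induct) auto

lemma take_lcp: "take (lcp x y) x = take (lcp x y) y"
  by (induction x y rule: lcp.induct) auto

lemma lcp_commute: "lcp x y = lcp y x"
  by (induction x y rule: lcp.induct) auto

lemma lcp_append_self [simp]: "lcp (x @ z) x = length x" "lcp x (x @ z) = length x"
  by (induction x) auto

lemma lcp_Cons_eq_0: "x = [] \<or> hd x \<noteq> a \<Longrightarrow> lcp x (a # y) = 0"
  by (cases x) auto

lemma tdist_Nil [simp]: "tdist [] y = length y"
  by (simp add: tdist_def)

lemma tdist_Cons_Cons: "tdist (a # x) (a # y) = tdist x y"
  by (simp add: tdist_def)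

lemma tdist_lcp_eq_0: "lcp x y = 0 \<Longrightarrow> tdist x y = length x + length y"
  by (simp add: tdist_def)

lemma tdist_commute: "tdist x y = tdist y x"
  by (simp add: tdist_def lcp_commute)

lemma Nil_in_TV [simp]: "[] \<in> TV"
  by (simp add: TV_def)

lemma TV_Cons: "a # x \<in> TV \<longleftrightarrow> a \<in> {0,1,2} \<and> x \<in> TV \<and> (x = [] \<or> hd x \<noteq> a)"
proof -
  have "(\<forall>i. Suc i < length (a # x) \<longrightarrow> (a # x) ! i \<noteq> (a # x) ! Suc i) \<longleftrightarrow>
        (x = [] \<or> hd x \<noteq> a) \<and> (\<forall>i. Suc i < length x \<longrightarrow> x ! i \<noteq> x ! Suc i)"
    by (cases x) (auto simp: hd_conv_nth nth_Cons split: nat.splits)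
  then show ?thesis
    by (auto simp: TV_def)
qed

lemma TV_letters: "u \<in> TV \<Longrightarrow> set u \<subseteq> {0,1,2}"
  by (auto simp: TV_def)

lemma TV_appendD: "u @ w \<in> TV \<Longrightarrow> u \<in> TV \<and> w \<in> TV"
proof (induction u)
  case (Cons a u)
  then show ?case
    by (cases u) (auto simp: TV_Cons)
qed simp

lemma tree_aut_comp: "tree_aut f \<Longrightarrow> tree_aut g \<Longrightarrow> tree_aut (f \<circ> g)"
  unfolding tree_aut_def by (auto intro: bij_betw_trans dest: bij_betwE)

lemma tree_aut_id: "tree_aut id"
  by (simp add: tree_aut_def)

text \<open>Left multiplication by a generator \<open>a\<close> of the free product \<open>\<int>/2 * \<int>/2 * \<int>/2\<close>,
  acting on reduced words.\<close>

definition left_mult :: "nat \<Rightarrow> nat list \<Rightarrow> nat list" where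
  "left_mult a x = (if x \<noteq> [] \<and> hd x = a then tl x else a # x)"

lemma left_mult_TV: "a \<in> {0,1,2} \<Longrightarrow> x \<in> TV \<Longrightarrow> left_mult a x \<in> TV"
  by (cases x) (auto simp: left_mult_def TV_Cons)

lemma left_mult_left_mult: "a \<in> {0,1,2} \<Longrightarrow> x \<in> TV \<Longrightarrow> left_mult a (left_mult a x) = x"
  by (cases x) (auto simp: left_mult_def TV_Cons)

lemma tdist_left_mult_cancel:
  assumes "a # x \<in> TV" and "\<not> (y \<noteq> [] \<and> hd y = a)"
  shows "tdist (left_mult a (a # x)) (left_mult a y) = tdist (a # x) y"
proof -
  have "lcp x (a # y) = 0"
    using assms(1) by (intro lcp_Cons_eq_0) (simp add: TV_Cons)
  moreover have "lcp (a # x) y = 0"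
    using assms(2) by (cases y) auto
  ultimately show ?thesis
    using assms(2) by (cases y) (auto simp: left_mult_def tdist_lcp_eq_0)
qed

lemma tdist_left_mult:
  assumes "x \<in> TV" "y \<in> TV"
  shows "tdist (left_mult a x) (left_mult a y) = tdist x y"
proof (cases "x \<noteq> [] \<and> hd x = a"; cases "y \<noteq> [] \<and> hd y = a")
  assume "x \<noteq> [] \<and> hd x = a" "y \<noteq> [] \<and> hd y = a"
  then show ?thesis
    by (cases x; cases y) (auto simp: left_mult_def tdist_Cons_Cons)
next
  assume "x \<noteq> [] \<and> hd x = a" "\<not> (y \<noteq> [] \<and> hd y = a)"
  then show ?thesis
    using assms tdist_left_mult_cancel[of a "tl x" y] by (cases x) auto
next
  assume "\<not> (x \<noteq> [] \<and> hd x = a)" "y \<noteq> [] \<and> hd y = a"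
  then show ?thesis
    using assms tdist_left_mult_cancel[of a "tl y" x] by (cases y) (auto simp: tdist_commute)
next
  assume "\<not> (x \<noteq> [] \<and> hd x = a)" "\<not> (y \<noteq> [] \<and> hd y = a)"
  then show ?thesis
    by (cases x; cases y) (auto simp: left_mult_def tdist_Cons_Cons)
qed

lemma tree_aut_left_mult: "a \<in> {0,1,2} \<Longrightarrow> tree_aut (left_mult a)"
  unfolding tree_aut_def
  by (auto intro!: bij_betw_byWitness[where f'="left_mult a"]
      simp: left_mult_TV left_mult_left_mult tdist_left_mult)

fun left_mult_word :: "nat list \<Rightarrow> nat list \<Rightarrow> nat list" where
  "left_mult_word [] = id"
| "left_mult_word (a # u) = left_mult a \<circ> left_mult_word u"

lemma tree_aut_left_mult_word: "set u \<subseteq> {0,1,2} \<Longrightarrow> tree_aut (left_mult_word u)"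
proof (induction u)
  case (Cons a u)
  then have "tree_aut (left_mult a)" "tree_aut (left_mult_word u)"
    by (simp_all add: tree_aut_left_mult)
  then show ?case
    unfolding left_mult_word.simps by (rule tree_aut_comp)
qed (simp add: tree_aut_id)

lemma left_mult_word_append: "left_mult_word (u @ v) = left_mult_word u \<circ> left_mult_word v"
  by (induction u) auto

lemma left_mult_word_rev_prefix: "u @ w \<in> TV \<Longrightarrow> left_mult_word (rev u) (u @ w) = w"
proof (induction u)
  case (Cons a u)
  then have "u @ w \<in> TV"
    by (simp add: TV_Cons)
  with Cons show ?case
    by (simp add: left_mult_word_append left_mult_def)
qed simp

section \<open>Driving times along rays\<close>

lemma edge_take_inj:
  assumes "{take k y, take (Suc k) y} = {take j y, take (Suc j) y}" "k < length y" "j < length y"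
  shows "k = j"
proof -
  have "length ` {take k y, take (Suc k) y} = length ` {take j y, take (Suc j) y}"
    using assms(1) by simp
  then have "{k, Suc k} = {j, Suc j}"
    using assms(2,3) by simp
  then show ?thesis
    by (auto simp: doubleton_eq_iff)
qed

lemma drive_time_append:
  "drive_time R \<omega> x (x @ z) =
     (\<Sum>k\<in>{length x..<length (x @ z)}. inverse (edge_speed R \<omega> {take k (x @ z), take (Suc k) (x @ z)}))"
proof -
  let ?e = "\<lambda>k. {take k (x @ z), take (Suc k) (x @ z)}"
  have "geo_edges x (x @ z) = ?e ` {length x..<length (x @ z)}"
    unfolding geo_edges_def by auto
  moreover have "inj_on ?e {length x..<length (x @ z)}"
    by (rule inj_onI) (metis atLeastLessThan_iff edge_take_inj)
  ultimately show ?thesis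
    unfolding drive_time_def by (simp only: sum.reindex comp_def)
qed

lemma drive_time_Nil:
  "drive_time R \<omega> [] w = (\<Sum>k<length w. inverse (edge_speed R \<omega> {take k w, take (Suc k) w}))"
  using drive_time_append[of R \<omega> "[]" w] by (simp add: lessThan_atLeast0)

lemma root_ray_TV: "root_ray x \<Longrightarrow> x n \<in> TV"
  unfolding root_ray_def by simp

lemma length_root_ray: "root_ray x \<Longrightarrow> length (x n) = n"
  unfolding root_ray_def troot_def by (metis le0 minus_nat.diff_0 tdist_Nil)

lemma root_ray_take:
  assumes r: "root_ray x" and "n \<le> m"
  shows "x n = take n (x m)"
proof -
  have l: "length (x n) = n" "length (x m) = m"
    using r length_root_ray by auto
  have "tdist (x n) (x m) = m - n"
    using r \<open>n \<le> m\<close> unfolding root_ray_def by simp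
  then have "lcp (x n) (x m) = n"
    using l lcp_le_length(1)[of "x n" "x m"] \<open>n \<le> m\<close> unfolding tdist_def by linarith
  then show ?thesis
    using take_lcp[of "x n" "x m"] l by simp
qed

lemma root_ray_append_drop: "root_ray x \<Longrightarrow> n \<le> m \<Longrightarrow> x m = x n @ drop n (x m)"
  by (metis append_take_drop_id root_ray_take)

lemma drive_time_root_ray_step:
  assumes r: "root_ray x"
  shows "drive_time R \<omega> (x n) (x (Suc n)) = inverse (edge_speed R \<omega> {x n, x (Suc n)})"
proof -
  have "x (Suc n) = x n @ drop n (x (Suc n))"
    using root_ray_append_drop[OF r] by simp
  then have "drive_time R \<omega> (x n) (x (Suc n)) =
      inverse (edge_speed R \<omega> {take n (x (Suc n)), take (Suc n) (x (Suc n))})"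
    using drive_time_append[of R \<omega> "x n" "drop n (x (Suc n))"] length_root_ray[OF r] by simp
  also have "\<dots> = inverse (edge_speed R \<omega> {x n, x (Suc n)})"
    using root_ray_take[OF r, of n "Suc n"] length_root_ray[OF r, of "Suc n"] by simp
  finally show ?thesis .
qed

section \<open>The law of the counts of a Poisson process\<close>

abbreviation nat_count :: "nat measure" where
  "nat_count \<equiv> count_space UNIV"

lemma poisson_process_prob_space: "poisson_process M I R \<Longrightarrow> prob_space M"
  unfolding poisson_process_def by simp

lemma poisson_process_indep_counts:
  fixes n :: nat
  assumes "poisson_process M I R"
    and "\<forall>i<n. A i \<in> sets I \<and> emeasure I (A i) < \<infinity>"
    and "\<forall>i<n. \<forall>j<n. i \<noteq> j \<longrightarrow> A i \<inter> A j = {}"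
  shows "prob_space.indep_vars M (\<lambda>_. nat_count) (\<lambda>i \<omega>. card (R \<omega> \<inter> A i)) {..<n}"
  using assms unfolding poisson_process_def by simp

lemma poisson_process_AE_finite:
  "poisson_process M I R \<Longrightarrow> A \<in> sets I \<Longrightarrow> emeasure I A < \<infinity> \<Longrightarrow> AE \<omega> in M. finite (R \<omega> \<inter> A)"
  unfolding poisson_process_def by simp

lemma poisson_process_count_prob:
  "poisson_process M I R \<Longrightarrow> A \<in> sets I \<Longrightarrow> emeasure I A < \<infinity> \<Longrightarrow>
    measure M {\<omega> \<in> space M. card (R \<omega> \<inter> A) = k} = exp (- measure I A) * measure I A ^ k / fact k"
  unfolding poisson_process_def by simp

lemma poisson_process_count_measurable:
  assumes pp: "poisson_process M I R" and "A \<in> sets I" "emeasure I A < \<infinity>"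
  shows "(\<lambda>\<omega>. card (R \<omega> \<inter> A)) \<in> measurable M nat_count"
proof -
  have "prob_space.indep_vars M (\<lambda>_. nat_count) (\<lambda>_ \<omega>. card (R \<omega> \<inter> A)) {..<Suc 0}"
    using poisson_process_indep_counts[OF pp, of "Suc 0" "\<lambda>_. A"] assms by auto
  then show ?thesis
    using poisson_process_prob_space[OF pp] by (simp add: prob_space.indep_vars_def)
qed

lemma poisson_processes_count_distr_eq:
  assumes pp: "poisson_process M I R" and pp': "poisson_process M I R'"
    and A: "A \<in> sets I" "emeasure I A < \<infinity>"
  shows "distr M nat_count (\<lambda>\<omega>. card (R \<omega> \<inter> A)) = distr M nat_count (\<lambda>\<omega>. card (R' \<omega> \<inter> A))"
proof (rule measure_eqI_countable[where A = UNIV])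
  fix k :: nat
  have "emeasure (distr M nat_count (\<lambda>\<omega>. card (Q \<omega> \<inter> A))) {k} =
        ennreal (exp (- measure I A) * measure I A ^ k / fact k)"
    if ppQ: "poisson_process M I Q" for Q
  proof -
    interpret prob_space M
      using poisson_process_prob_space[OF ppQ] .
    have "(\<lambda>\<omega>. card (Q \<omega> \<inter> A)) -` {k} \<inter> space M = {\<omega> \<in> space M. card (Q \<omega> \<inter> A) = k}"
      by auto
    then show ?thesis
      using poisson_process_count_measurable[OF ppQ A] poisson_process_count_prob[OF ppQ A]
      by (simp add: emeasure_distr emeasure_eq_measure)
  qed
  then show "emeasure (distr M nat_count (\<lambda>\<omega>. card (R \<omega> \<inter> A))) {k} =
             emeasure (distr M nat_count (\<lambda>\<omega>. card (R' \<omega> \<inter> A))) {k}"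
    using pp pp' by simp
qed auto

lemma sets_PiM_nat_count:
  assumes "finite J" and X: "X \<subseteq> space (PiM J (\<lambda>_. nat_count))"
  shows "X \<in> sets (PiM J (\<lambda>_. nat_count))"
proof -
  have sp: "space (PiM J (\<lambda>_. nat_count)) = PiE J (\<lambda>_. UNIV)"
    by (simp add: space_PiM)
  have "countable (PiE J (\<lambda>_. UNIV :: nat set))"
    using \<open>finite J\<close> by (simp add: countable_PiE)
  then have "countable X"
    using X sp by (metis countable_subset)
  moreover have "{c} \<in> sets (PiM J (\<lambda>_. nat_count))" if "c \<in> X" for c
  proof -
    have "c \<in> PiE J (\<lambda>_. UNIV)"
      using that X sp by auto
    then have "{c} = PiE J (\<lambda>j. {c j})"
      by (auto simp: PiE_iff extensional_def fun_eq_iff) metis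
    then show ?thesis
      using \<open>finite J\<close> by (simp add: sets_PiM_I_finite)
  qed
  ultimately have "(\<Union>c\<in>X. {c}) \<in> sets (PiM J (\<lambda>_. nat_count))"
    by (intro sets.countable_UN') auto
  then show ?thesis
    by simp
qed

lemma measurable_PiM_nat_count:
  assumes "finite J" and "f \<in> space (PiM J (\<lambda>_. nat_count)) \<rightarrow> space N"
  shows "f \<in> measurable (PiM J (\<lambda>_. nat_count)) N"
  using assms by (intro measurableI sets_PiM_nat_count) auto

text \<open>The atoms of the Boolean algebra generated by \<open>A 0, \<dots>, A (k - 1)\<close>, enumerated
  by \<open>j < n\<close>; the empty atom is indexed as well, which makes \<open>0 < n\<close>.\<close>

lemma finite_measure_atoms:
  fixes A :: "nat \<Rightarrow> 'a set" and I :: "'a measure"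
  assumes A: "\<forall>i<k. A i \<in> sets I \<and> emeasure I (A i) < \<infinity>"
  obtains n :: nat and B :: "nat \<Rightarrow> 'a set" and H :: "nat \<Rightarrow> nat set"
  where "0 < n"
    and "\<And>j. j < n \<Longrightarrow> B j \<in> sets I \<and> emeasure I (B j) < \<infinity>"
    and "\<And>j j'. j < n \<Longrightarrow> j' < n \<Longrightarrow> j \<noteq> j' \<Longrightarrow> B j \<inter> B j' = {}"
    and "\<And>i. i < k \<Longrightarrow> H i \<subseteq> {..<n} \<and> A i = (\<Union>j\<in>H i. B j)"
proof -
  obtain h where h: "bij_betw h {..<card (Pow {..<k})} (Pow {..<k})"
    using ex_bij_betw_nat_finite[of "Pow {..<k}"] by (auto simp: atLeast0LessThan)
  define n where "n = card (Pow {..<k})"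
  have himg: "h ` {..<n} = Pow {..<k}" and hinj: "inj_on h {..<n}"
    using h by (simp_all add: bij_betw_def n_def)
  define B where "B j = {p \<in> space I. h j \<noteq> {} \<and> (\<forall>i<k. p \<in> A i \<longleftrightarrow> i \<in> h j)}" for j
  define H where "H i = {j. j < n \<and> i \<in> h j}" for i
  have "0 < n"
    unfolding n_def by (simp add: card_Pow)
  moreover have "B j \<in> sets I \<and> emeasure I (B j) < \<infinity>" if "j < n" for j
  proof
    have "{p \<in> space I. p \<in> A i \<longleftrightarrow> i \<in> h j} \<in> sets I" if "i < k" for i
      using that A by (cases "i \<in> h j") (auto simp: Int_def[symmetric] Diff_eq[symmetric]
          Collect_conj_eq[symmetric] intro: sets.Diff sets.Int_space_eq1)
    then show "B j \<in> sets I"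
      unfolding B_def by (intro sets.sets_Collect_conj sets.sets_Collect_const
          sets.sets_Collect_finite_All') auto
    show "emeasure I (B j) < \<infinity>"
    proof (cases "h j = {}")
      case False
      then obtain i where "i \<in> h j"
        by auto
      moreover have "h j \<subseteq> {..<k}"
        using himg \<open>j < n\<close> by auto
      ultimately have "B j \<subseteq> A i" "i < k"
        unfolding B_def by auto
      then show ?thesis
        using A by (metis emeasure_mono order.strict_trans1)
    qed (simp add: B_def)
  qed
  moreover have "B j \<inter> B j' = {}" if "j < n" "j' < n" "j \<noteq> j'" for j j'
  proof -
    have "h j \<noteq> h j'"
      using inj_onD[OF hinj] that by auto
    moreover have "h j \<subseteq> {..<k}" "h j' \<subseteq> {..<k}"
      using himg that by auto
    ultimately have "\<exists>i<k. i \<in> h j \<longleftrightarrow> i \<notin> h j'"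
      by blast
    then show ?thesis
      unfolding B_def by auto
  qed
  moreover have "H i \<subseteq> {..<n} \<and> A i = (\<Union>j\<in>H i. B j)" if "i < k" for i
  proof -
    have "A i \<subseteq> (\<Union>j\<in>H i. B j)"
    proof
      fix p assume p: "p \<in> A i"
      have "{i. i < k \<and> p \<in> A i} \<in> h ` {..<n}"
        unfolding himg by auto
      then obtain j where "j < n" "h j = {i. i < k \<and> p \<in> A i}"
        by auto
      moreover have "p \<in> space I"
        using p that A sets.sets_into_space by blast
      ultimately show "p \<in> (\<Union>j\<in>H i. B j)"
        using p that unfolding B_def H_def by auto
    qed
    then show ?thesis
      using that unfolding B_def H_def by auto
  qed
  ultimately show ?thesis
    by (rule that)
qed

lemma card_Int_UN_disjoint:
  assumes "finite H" and "finite (S \<inter> A)" and "A = (\<Union>j\<in>H. B j)"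
    and "\<And>j j'. j \<in> H \<Longrightarrow> j' \<in> H \<Longrightarrow> j \<noteq> j' \<Longrightarrow> B j \<inter> B j' = {}"
  shows "card (S \<inter> A) = (\<Sum>j\<in>H. card (S \<inter> B j))"
proof -
  have "S \<inter> A = (\<Union>j\<in>H. S \<inter> B j)"
    using assms(3) by auto
  moreover have "finite (S \<inter> B j)" if "j \<in> H" for j
    using assms(2,3) that by (auto elim: finite_subset[rotated])
  ultimately show ?thesis
    using assms(1,4) by (simp only:) (subst card_UN_disjoint; blast)
qed

lemma poisson_process_counts_distr_atoms:
  fixes k n :: nat and B :: "nat \<Rightarrow> 's set" and I :: "'s measure"
  assumes pp: "poisson_process M I R" and "0 < n"
    and A: "\<And>i. i < k \<Longrightarrow> A i \<in> sets I \<and> emeasure I (A i) < \<infinity>"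
    and B: "\<And>j. j < n \<Longrightarrow> B j \<in> sets I \<and> emeasure I (B j) < \<infinity>"
    and disj: "\<And>j j'. j < n \<Longrightarrow> j' < n \<Longrightarrow> j \<noteq> j' \<Longrightarrow> B j \<inter> B j' = {}"
    and H: "\<And>i. i < k \<Longrightarrow> H i \<subseteq> {..<n} \<and> A i = (\<Union>j\<in>H i. B j)"
  shows "distr M (PiM {..<k} (\<lambda>_. nat_count)) (\<lambda>\<omega>. \<lambda>i\<in>{..<k}. card (R \<omega> \<inter> A i)) =
         distr (PiM {..<n} (\<lambda>j. distr M nat_count (\<lambda>\<omega>. card (R \<omega> \<inter> B j))))
           (PiM {..<k} (\<lambda>_. nat_count)) (\<lambda>c. \<lambda>i\<in>{..<k}. \<Sum>j\<in>H i. c j)"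
proof -
  interpret prob_space M
    using poisson_process_prob_space[OF pp] .
  define X where "X = (\<lambda>\<omega>. \<lambda>j\<in>{..<n}. card (R \<omega> \<inter> B j))"
  define G where "G = (\<lambda>c :: nat \<Rightarrow> nat. \<lambda>i\<in>{..<k}. \<Sum>j\<in>H i. c j)"
  have Xm: "X \<in> measurable M (PiM {..<n} (\<lambda>_. nat_count))"
    unfolding X_def using poisson_process_count_measurable[OF pp] B by (intro measurable_restrict) auto
  have Gm: "G \<in> measurable (PiM {..<n} (\<lambda>_. nat_count)) (PiM {..<k} (\<lambda>_. nat_count))"
    unfolding G_def by (intro measurable_PiM_nat_count) (auto simp: space_PiM)
  have Am: "(\<lambda>\<omega>. \<lambda>i\<in>{..<k}. card (R \<omega> \<inter> A i)) \<in> measurable M (PiM {..<k} (\<lambda>_. nat_count))"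
    using poisson_process_count_measurable[OF pp] A by (intro measurable_restrict) auto
  have "indep_vars (\<lambda>_. nat_count) (\<lambda>j \<omega>. card (R \<omega> \<inter> B j)) {..<n}"
    using poisson_process_indep_counts[OF pp, of n B] B disj by auto
  then have distr_X: "distr M (PiM {..<n} (\<lambda>_. nat_count)) X =
      PiM {..<n} (\<lambda>j. distr M nat_count (\<lambda>\<omega>. card (R \<omega> \<inter> B j)))"
    unfolding X_def using \<open>0 < n\<close> poisson_process_count_measurable[OF pp] B
    by (subst indep_vars_iff_distr_eq_PiM'[symmetric]) auto
  have "AE \<omega> in M. \<forall>i\<in>{..<k}. finite (R \<omega> \<inter> A i)"
    using poisson_process_AE_finite[OF pp] A by (intro eventually_ball_finite) auto
  then have "AE \<omega> in M. (\<lambda>i\<in>{..<k}. card (R \<omega> \<inter> A i)) = G (X \<omega>)"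
  proof eventually_elim
    case (elim \<omega>)
    show ?case
      unfolding G_def X_def
    proof (rule restrict_ext)
      fix i assume "i \<in> {..<k}"
      then have Hi: "H i \<subseteq> {..<n}" "A i = (\<Union>j\<in>H i. B j)"
        using H by auto
      have "finite (R \<omega> \<inter> A i)"
        using elim \<open>i \<in> {..<k}\<close> by blast
      then have "card (R \<omega> \<inter> A i) = (\<Sum>j\<in>H i. card (R \<omega> \<inter> B j))"
        using disj Hi(1)
        by (intro card_Int_UN_disjoint[OF finite_subset[OF Hi(1) finite_lessThan] _ Hi(2)]) auto
      then show "card (R \<omega> \<inter> A i) = (\<Sum>j\<in>H i. (\<lambda>j\<in>{..<n}. card (R \<omega> \<inter> B j)) j)"
        using Hi(1) by (simp add: subset_eq)
    qed
  qed
  then have "distr M (PiM {..<k} (\<lambda>_. nat_count)) (\<lambda>\<omega>. \<lambda>i\<in>{..<k}. card (R \<omega> \<inter> A i)) =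
      distr M (PiM {..<k} (\<lambda>_. nat_count)) (G \<circ> X)"
    using Am Gm Xm by (intro distr_cong_AE) auto
  also have "\<dots> = distr (distr M (PiM {..<n} (\<lambda>_. nat_count)) X) (PiM {..<k} (\<lambda>_. nat_count)) G"
    using Gm Xm by (simp add: distr_distr)
  finally show ?thesis
    unfolding distr_X G_def .
qed

lemma poisson_processes_counts_distr_eq_finite:
  fixes k :: nat and I :: "'s measure"
  assumes pp: "poisson_process M I R" and pp': "poisson_process M I R'"
    and A: "\<forall>i<k. A i \<in> sets I \<and> emeasure I (A i) < \<infinity>"
  shows "distr M (PiM {..<k} (\<lambda>_. nat_count)) (\<lambda>\<omega>. \<lambda>i\<in>{..<k}. card (R \<omega> \<inter> A i)) =
         distr M (PiM {..<k} (\<lambda>_. nat_count)) (\<lambda>\<omega>. \<lambda>i\<in>{..<k}. card (R' \<omega> \<inter> A i))"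
proof -
  obtain n :: nat and B :: "nat \<Rightarrow> 's set" and H where atoms: "0 < n"
    "\<And>j. j < n \<Longrightarrow> B j \<in> sets I \<and> emeasure I (B j) < \<infinity>"
    "\<And>j j'. j < n \<Longrightarrow> j' < n \<Longrightarrow> j \<noteq> j' \<Longrightarrow> B j \<inter> B j' = {}"
    "\<And>i. i < k \<Longrightarrow> H i \<subseteq> {..<n} \<and> A i = (\<Union>j\<in>H i. B j)"
    using finite_measure_atoms[OF A] by metis
  have "PiM {..<n} (\<lambda>j. distr M nat_count (\<lambda>\<omega>. card (R \<omega> \<inter> B j))) =
        PiM {..<n} (\<lambda>j. distr M nat_count (\<lambda>\<omega>. card (R' \<omega> \<inter> B j)))"
    using poisson_processes_count_distr_eq[OF pp pp'] atoms(2) by (intro PiM_cong) auto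
  then show ?thesis
    using poisson_process_counts_distr_atoms[OF pp atoms(1) _ atoms(2-4)]
      poisson_process_counts_distr_atoms[OF pp' atoms(1) _ atoms(2-4)] A by simp
qed

lemma emeasure_distr_counts_cylinder:
  fixes J :: "'i set" and A :: "'i \<Rightarrow> 's set" and I :: "'s measure"
  assumes pp: "poisson_process M I R" and A: "\<forall>i\<in>J. A i \<in> sets I \<and> emeasure I (A i) < \<infinity>"
    and "K \<subseteq> J" and g: "bij_betw g {..<card K} K" and E: "\<And>i. i \<in> K \<Longrightarrow> E i \<in> sets nat_count"
  shows "emeasure (distr M (PiM J (\<lambda>_. nat_count)) (\<lambda>\<omega>. \<lambda>i\<in>J. card (R \<omega> \<inter> A i)))
           (prod_emb J (\<lambda>_. nat_count) K (PiE K E)) =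
         emeasure (distr M (PiM {..<card K} (\<lambda>_. nat_count)) (\<lambda>\<omega>. \<lambda>l\<in>{..<card K}. card (R \<omega> \<inter> A (g l))))
           (PiE {..<card K} (\<lambda>l. E (g l)))"
proof -
  have gK: "g ` {..<card K} = K"
    using g by (simp add: bij_betw_def)
  then have "finite K"
    by (metis finite_imageI finite_lessThan)
  have "(\<lambda>i\<in>J. card (R \<omega> \<inter> A i)) \<in> prod_emb J (\<lambda>_. nat_count) K (PiE K E) \<longleftrightarrow>
        (\<lambda>l\<in>{..<card K}. card (R \<omega> \<inter> A (g l))) \<in> PiE {..<card K} (\<lambda>l. E (g l))" for \<omega>
  proof -
    have "(\<lambda>i\<in>J. card (R \<omega> \<inter> A i)) \<in> prod_emb J (\<lambda>_. nat_count) K (PiE K E) \<longleftrightarrow>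
        (\<forall>i\<in>K. card (R \<omega> \<inter> A i) \<in> E i)"
      using \<open>K \<subseteq> J\<close> by (auto simp: prod_emb_iff PiE_iff extensional_def)
    also have "\<dots> \<longleftrightarrow> (\<forall>i\<in>g ` {..<card K}. card (R \<omega> \<inter> A i) \<in> E i)"
      by (simp only: gK)
    also have "\<dots> \<longleftrightarrow> (\<lambda>l\<in>{..<card K}. card (R \<omega> \<inter> A (g l))) \<in> PiE {..<card K} (\<lambda>l. E (g l))"
      by (auto simp: PiE_iff)
    finally show ?thesis .
  qed
  moreover have "prod_emb J (\<lambda>_. nat_count) K (PiE K E) \<in> sets (PiM J (\<lambda>_. nat_count))"
    using \<open>K \<subseteq> J\<close> \<open>finite K\<close> E by (intro sets_PiM_I) auto
  moreover have "PiE {..<card K} (\<lambda>l. E (g l)) \<in> sets (PiM {..<card K} (\<lambda>_. nat_count))"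
    by (intro sets_PiM_I_finite) auto
  moreover have "(\<lambda>\<omega>. \<lambda>i\<in>J. card (R \<omega> \<inter> A i)) \<in> measurable M (PiM J (\<lambda>_. nat_count))"
    using poisson_process_count_measurable[OF pp] A by (intro measurable_restrict) auto
  moreover have "(\<lambda>\<omega>. \<lambda>l\<in>{..<card K}. card (R \<omega> \<inter> A (g l))) \<in> measurable M (PiM {..<card K} (\<lambda>_. nat_count))"
    using poisson_process_count_measurable[OF pp] A gK \<open>K \<subseteq> J\<close> by (intro measurable_restrict) auto
  ultimately show ?thesis
    by (simp add: emeasure_distr vimage_def Int_def)
qed

lemma poisson_processes_counts_distr_eq:
  fixes J :: "'i set" and A :: "'i \<Rightarrow> 's set" and I :: "'s measure"
  assumes pp: "poisson_process M I R" and pp': "poisson_process M I R'"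
    and A: "\<forall>i\<in>J. A i \<in> sets I \<and> emeasure I (A i) < \<infinity>"
  shows "distr M (PiM J (\<lambda>_. nat_count)) (\<lambda>\<omega>. \<lambda>i\<in>J. card (R \<omega> \<inter> A i)) =
         distr M (PiM J (\<lambda>_. nat_count)) (\<lambda>\<omega>. \<lambda>i\<in>J. card (R' \<omega> \<inter> A i))"
proof (rule measure_eqI_PiM_infinite)
  interpret prob_space M
    using poisson_process_prob_space[OF pp] .
  have "prob_space (distr M (PiM J (\<lambda>_. nat_count)) (\<lambda>\<omega>. \<lambda>i\<in>J. card (R \<omega> \<inter> A i)))"
    using poisson_process_count_measurable[OF pp] A by (intro prob_space_distr measurable_restrict) auto
  then show "finite_measure (distr M (PiM J (\<lambda>_. nat_count)) (\<lambda>\<omega>. \<lambda>i\<in>J. card (R \<omega> \<inter> A i)))"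
    by (simp add: prob_space_def)
  fix E K assume K: "finite K" "K \<subseteq> J" and E: "\<And>i. i \<in> K \<Longrightarrow> E i \<in> sets nat_count"
  obtain g where g: "bij_betw g {..<card K} K"
    using ex_bij_betw_nat_finite[OF K(1)] by (auto simp: atLeast0LessThan)
  have "distr M (PiM {..<card K} (\<lambda>_. nat_count)) (\<lambda>\<omega>. \<lambda>l\<in>{..<card K}. card (R \<omega> \<inter> A (g l))) =
        distr M (PiM {..<card K} (\<lambda>_. nat_count)) (\<lambda>\<omega>. \<lambda>l\<in>{..<card K}. card (R' \<omega> \<inter> A (g l)))"
    using A g K(2) by (intro poisson_processes_counts_distr_eq_finite[OF pp pp']) (auto dest: bij_betwE)
  then show "emeasure (distr M (PiM J (\<lambda>_. nat_count)) (\<lambda>\<omega>. \<lambda>i\<in>J. card (R \<omega> \<inter> A i)))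
        (prod_emb J (\<lambda>_. nat_count) K (PiE K E)) =
      emeasure (distr M (PiM J (\<lambda>_. nat_count)) (\<lambda>\<omega>. \<lambda>i\<in>J. card (R' \<omega> \<inter> A i)))
        (prod_emb J (\<lambda>_. nat_count) K (PiE K E))"
    using emeasure_distr_counts_cylinder[OF pp A K(2) g E]
      emeasure_distr_counts_cylinder[OF pp' A K(2) g E] by simp
qed simp_all

section \<open>The intensity measure\<close>

lemma lines_subset_TV: "l \<in> lines \<Longrightarrow> l \<subseteq> TV"
  unfolding lines_def by auto

lemma line_measure_space: "line_measure \<mu> \<Longrightarrow> space \<mu> = lines"
  unfolding line_measure_def by simp

lemma line_measure_sets: "line_measure \<mu> \<Longrightarrow> sets \<mu> = line_sets"
  unfolding line_measure_def by simp

lemma lines_through_sets: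
  assumes "line_measure \<mu>"
  shows "{l \<in> lines. x \<in> l} \<in> sets \<mu>"
proof (cases "x \<in> TV")
  case True
  then show ?thesis
    using line_measure_sets[OF assms] unfolding line_sets_def by auto
next
  case False
  then have "{l \<in> lines. x \<in> l} = {}"
    using lines_subset_TV by auto
  then show ?thesis
    by (metis sets.empty_sets)
qed

definition road_density :: "real \<Rightarrow> nat list set \<times> real \<Rightarrow> ennreal" where
  "road_density \<beta> = (\<lambda>(l, v). if 0 < v then ennreal ((\<beta> - 1) * v powr (- \<beta>)) else 0)"

lemma road_intensity_eq_density: "road_intensity \<mu> \<beta> = density (\<mu> \<Otimes>\<^sub>M lborel) (road_density \<beta>)"
  unfolding road_intensity_def road_density_def ..

lemma sets_road_intensity [simp]: "sets (road_intensity \<mu> \<beta>) = sets (\<mu> \<Otimes>\<^sub>M lborel)"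
  unfolding road_intensity_def by simp

lemma space_road_intensity: "line_measure \<mu> \<Longrightarrow> space (road_intensity \<mu> \<beta>) = lines \<times> UNIV"
  unfolding road_intensity_def by (simp add: space_pair_measure line_measure_space)

lemma road_density_measurable [measurable]: "road_density \<beta> \<in> borel_measurable (\<mu> \<Otimes>\<^sub>M lborel)"
  unfolding road_density_def by measurable

lemma nn_integral_road_density_tail_finite:
  assumes "\<beta> > 1" and "q > 0"
  shows "(\<integral>\<^sup>+ v. road_density \<beta> (l, v) * indicator {q<..} v \<partial>lborel) < \<infinity>"
proof -
  have "((\<lambda>x. (\<beta> - 1) * x powr (- \<beta>)) has_integral (\<beta> - 1) * (- (q powr (- \<beta> + 1)) / (- \<beta> + 1))) {q..}"
    using has_integral_powr_to_inf[of "- \<beta>" q] assms by (intro has_integral_mult_right) auto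
  then have "(\<integral>\<^sup>+ v. ennreal ((\<beta> - 1) * v powr (- \<beta>)) * indicator {q..} v \<partial>lborel) =
      ennreal ((\<beta> - 1) * (- (q powr (- \<beta> + 1)) / (- \<beta> + 1)))"
    using assms by (intro nn_integral_has_integral_lebesgue') auto
  moreover have "(\<integral>\<^sup>+ v. road_density \<beta> (l, v) * indicator {q<..} v \<partial>lborel) \<le>
      (\<integral>\<^sup>+ v. ennreal ((\<beta> - 1) * v powr (- \<beta>)) * indicator {q..} v \<partial>lborel)"
    using assms by (intro nn_integral_mono) (auto simp: road_density_def indicator_def)
  ultimately show ?thesis
    using order.strict_trans1 by fastforce
qed

text \<open>An edge is indexed by its endpoint \<open>w\<close> farther from the root.\<close>

definition edge_lines :: "nat list \<Rightarrow> nat list set set" where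
  "edge_lines w = {l \<in> lines. butlast w \<in> l \<and> w \<in> l}"

definition fast_edge_roads :: "nat list \<Rightarrow> real \<Rightarrow> (nat list set \<times> real) set" where
  "fast_edge_roads w q = edge_lines w \<times> {q<..}"

lemma edge_lines_sets:
  assumes "line_measure \<mu>"
  shows "edge_lines w \<in> sets \<mu>"
proof -
  have "edge_lines w = {l \<in> lines. butlast w \<in> l} \<inter> {l \<in> lines. w \<in> l}"
    unfolding edge_lines_def by auto
  then show ?thesis
    using lines_through_sets[OF assms] by auto
qed

lemma fast_edge_roads_sets: "line_measure \<mu> \<Longrightarrow> fast_edge_roads w q \<in> sets (road_intensity \<mu> \<beta>)"
  unfolding fast_edge_roads_def by (simp add: edge_lines_sets)

lemma emeasure_edge_lines_finite:
  assumes lm: "line_measure \<mu>" and "w \<noteq> []"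
  shows "emeasure \<mu> (edge_lines w) < \<infinity>"
proof (cases "w \<in> TV")
  case True
  have "butlast w \<in> TV"
    using TV_appendD[of "butlast w" "[last w]"] True \<open>w \<noteq> []\<close> by simp
  moreover have "butlast w \<noteq> w"
    using \<open>w \<noteq> []\<close> by (metis append_butlast_last_id append_self_conv list.distinct(1))
  ultimately have "emeasure \<mu> (edge_lines w) = ennreal ((1/2) ^ tdist (butlast w) w)"
    using lm True unfolding line_measure_def edge_lines_def by blast
  then show ?thesis
    by simp
next
  case False
  then have "edge_lines w = {}"
    using lines_subset_TV unfolding edge_lines_def by auto
  then show ?thesis
    by simp
qed

lemma emeasure_fast_edge_roads_finite:
  assumes lm: "line_measure \<mu>" and "\<beta> > 1" and "w \<noteq> []" and "q > 0"
  shows "emeasure (road_intensity \<mu> \<beta>) (fast_edge_roads w q) < \<infinity>"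
proof -
  define C where "C = (\<integral>\<^sup>+ v. road_density \<beta> (undefined, v) * indicator {q<..} v \<partial>lborel)"
  have sets: "fast_edge_roads w q \<in> sets (\<mu> \<Otimes>\<^sub>M lborel)"
    using fast_edge_roads_sets[OF lm] by simp
  have "emeasure (road_intensity \<mu> \<beta>) (fast_edge_roads w q) =
      (\<integral>\<^sup>+ p. road_density \<beta> p * indicator (fast_edge_roads w q) p \<partial>(\<mu> \<Otimes>\<^sub>M lborel))"
    unfolding road_intensity_eq_density using sets by (intro emeasure_density) auto
  also have "\<dots> = (\<integral>\<^sup>+ l. \<integral>\<^sup>+ v. road_density \<beta> (l, v) * indicator (fast_edge_roads w q) (l, v) \<partial>lborel \<partial>\<mu>)"
    using sets by (intro lborel.nn_integral_fst[symmetric]) auto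
  also have "\<dots> = (\<integral>\<^sup>+ l. C * indicator (edge_lines w) l \<partial>\<mu>)"
    unfolding C_def fast_edge_roads_def
    by (intro nn_integral_cong) (auto simp: road_density_def indicator_def)
  also have "\<dots> = C * emeasure \<mu> (edge_lines w)"
    using edge_lines_sets[OF lm] by (rule nn_integral_cmult_indicator)
  also have "\<dots> < \<infinity>"
    using nn_integral_road_density_tail_finite[OF assms(2,4)] emeasure_edge_lines_finite[OF lm assms(3)]
    unfolding C_def by (simp add: ennreal_mult_less_top)
  finally show ?thesis .
qed

section \<open>Moving the road process by a tree automorphism\<close>

lemma tree_aut_image_line:
  assumes a: "tree_aut \<psi>" and "l \<in> lines"
  shows "\<psi> ` l \<in> lines"
proof -
  obtain f where f: "l = range f" "\<forall>i. f i \<in> TV" "\<forall>i j. tdist (f i) (f j) = nat \<bar>i - j\<bar>"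
    using \<open>l \<in> lines\<close> unfolding lines_def by blast
  then have "\<forall>i. (\<psi> \<circ> f) i \<in> TV" "\<forall>i j. tdist ((\<psi> \<circ> f) i) ((\<psi> \<circ> f) j) = nat \<bar>i - j\<bar>"
    using a unfolding tree_aut_def by (auto dest: bij_betwE)
  then have "range (\<psi> \<circ> f) \<in> lines"
    unfolding lines_def by blast
  then show ?thesis
    using f(1) by (simp add: image_comp)
qed

lemma tree_aut_image_mem_iff:
  "tree_aut \<psi> \<Longrightarrow> l \<subseteq> TV \<Longrightarrow> z \<in> TV \<Longrightarrow> \<psi> z \<in> \<psi> ` l \<longleftrightarrow> z \<in> l"
  unfolding tree_aut_def bij_betw_def by (auto simp: inj_on_def)

lemma measurable_image_line:
  assumes lm: "line_measure \<mu>" and a: "tree_aut \<psi>"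
  shows "(\<lambda>l. \<psi> ` l) \<in> measurable \<mu> \<mu>"
proof (rule measurable_sigma_sets)
  show "sets \<mu> = sigma_sets lines {{l \<in> lines. x \<in> l} | x. x \<in> TV}"
    using line_measure_sets[OF lm] unfolding line_sets_def .
  show "(\<lambda>l. \<psi> ` l) \<in> space \<mu> \<rightarrow> lines"
    using line_measure_space[OF lm] tree_aut_image_line[OF a] by auto
  fix Y assume "Y \<in> {{l \<in> lines. x \<in> l} | x. x \<in> TV}"
  then obtain x where x: "x \<in> TV" "Y = {l \<in> lines. x \<in> l}"
    by auto
  moreover obtain z where "z \<in> TV" "x = \<psi> z"
    using x(1) a unfolding tree_aut_def bij_betw_def by (metis imageE)
  ultimately have "\<psi> ` l \<in> Y \<longleftrightarrow> z \<in> l" if "l \<in> lines" for l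
    using tree_aut_image_mem_iff[OF a lines_subset_TV[OF that] \<open>z \<in> TV\<close>]
      tree_aut_image_line[OF a that] by auto
  then have "(\<lambda>l. \<psi> ` l) -` Y \<inter> space \<mu> = {l \<in> lines. z \<in> l}"
    using line_measure_space[OF lm] by auto
  then show "(\<lambda>l. \<psi> ` l) -` Y \<inter> space \<mu> \<in> sets \<mu>"
    using lines_through_sets[OF lm] by simp
qed auto

lemma distr_image_line:
  assumes lm: "line_measure \<mu>" and a: "tree_aut \<psi>"
  shows "distr \<mu> \<mu> (\<lambda>l. \<psi> ` l) = \<mu>"
proof (rule measure_eqI)
  fix A assume "A \<in> sets (distr \<mu> \<mu> (\<lambda>l. \<psi> ` l))"
  moreover have "\<forall>A\<in>sets \<mu>. emeasure \<mu> ((\<lambda>l. \<psi> ` l) -` A \<inter> lines) = emeasure \<mu> A"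
    using lm a unfolding line_measure_def by blast
  ultimately show "emeasure (distr \<mu> \<mu> (\<lambda>l. \<psi> ` l)) A = emeasure \<mu> A"
    using measurable_image_line[OF lm a] line_measure_space[OF lm] by (simp add: emeasure_distr)
qed simp

definition move_road :: "(nat list \<Rightarrow> nat list) \<Rightarrow> nat list set \<times> real \<Rightarrow> nat list set \<times> real" where
  "move_road \<psi> = (\<lambda>(l, v). (\<psi> ` l, v))"

lemma measurable_move_road:
  assumes lm: "line_measure \<mu>" and a: "tree_aut \<psi>"
  shows "move_road \<psi> \<in> measurable (\<mu> \<Otimes>\<^sub>M lborel) (\<mu> \<Otimes>\<^sub>M lborel)"
proof -
  have [measurable]: "(\<lambda>l. \<psi> ` l) \<in> measurable \<mu> \<mu>"
    by (rule measurable_image_line[OF lm a])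
  show ?thesis
    unfolding move_road_def by measurable
qed

lemma distr_move_road:
  assumes lm: "line_measure \<mu>" and a: "tree_aut \<psi>"
  shows "distr (\<mu> \<Otimes>\<^sub>M lborel) (\<mu> \<Otimes>\<^sub>M lborel) (move_road \<psi>) = \<mu> \<Otimes>\<^sub>M lborel"
proof -
  have "distr \<mu> \<mu> (\<lambda>l. \<psi> ` l) \<Otimes>\<^sub>M distr lborel lborel (\<lambda>x. x) =
      distr (\<mu> \<Otimes>\<^sub>M lborel) (\<mu> \<Otimes>\<^sub>M lborel) (\<lambda>(x, y). (\<psi> ` x, y))"
    by (rule pair_measure_distr[OF measurable_image_line[OF lm a]])
      (auto simp: lborel.sigma_finite_measure_axioms)
  then show ?thesis
    unfolding distr_image_line[OF lm a] distr_id move_road_def by (rule sym)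
qed

lemma emeasure_road_intensity_vimage_move_road:
  assumes lm: "line_measure \<mu>" and a: "tree_aut \<psi>" and A: "A \<in> sets (road_intensity \<mu> \<beta>)"
  shows "emeasure (road_intensity \<mu> \<beta>) (move_road \<psi> -` A \<inter> (lines \<times> UNIV)) =
         emeasure (road_intensity \<mu> \<beta>) A"
proof -
  let ?N = "\<mu> \<Otimes>\<^sub>M lborel"
  have A': "A \<in> sets ?N"
    using A by simp
  have sp: "space ?N = lines \<times> UNIV"
    by (simp add: space_pair_measure line_measure_space[OF lm])
  have pm: "move_road \<psi> \<in> measurable ?N ?N"
    by (rule measurable_move_road[OF lm a])
  have density_move: "road_density \<beta> (move_road \<psi> p) = road_density \<beta> p" for p
    unfolding road_density_def move_road_def by (cases p) simp
  have "emeasure (road_intensity \<mu> \<beta>) (move_road \<psi> -` A \<inter> space ?N) =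
      (\<integral>\<^sup>+ p. road_density \<beta> p * indicator (move_road \<psi> -` A \<inter> space ?N) p \<partial>?N)"
    unfolding road_intensity_eq_density using measurable_sets[OF pm A'] by (intro emeasure_density) auto
  also have "\<dots> = (\<integral>\<^sup>+ p. road_density \<beta> (move_road \<psi> p) * indicator A (move_road \<psi> p) \<partial>?N)"
    by (intro nn_integral_cong) (auto simp: density_move indicator_def)
  also have "\<dots> = (\<integral>\<^sup>+ p. road_density \<beta> p * indicator A p \<partial>(distr ?N ?N (move_road \<psi>)))"
    using pm A' by (intro nn_integral_distr[symmetric]) auto
  also have "\<dots> = emeasure (road_intensity \<mu> \<beta>) A"
    unfolding distr_move_road[OF lm a] road_intensity_eq_density using A' by (intro emeasure_density[symmetric]) auto
  finally show ?thesis
    unfolding sp .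
qed

lemma move_road_vimage_sets:
  assumes lm: "line_measure \<mu>" and a: "tree_aut \<psi>" and A: "A \<in> sets (road_intensity \<mu> \<beta>)"
  shows "move_road \<psi> -` A \<inter> (lines \<times> UNIV) \<in> sets (road_intensity \<mu> \<beta>)"
  using measurable_sets[OF measurable_move_road[OF lm a], of A] A
  by (simp add: space_pair_measure line_measure_space[OF lm])

definition moved_roads ::
    "(nat list \<Rightarrow> nat list) \<Rightarrow> ('w \<Rightarrow> (nat list set \<times> real) set) \<Rightarrow> 'w \<Rightarrow> (nat list set \<times> real) set" where
  "moved_roads \<psi> R \<omega> = move_road \<psi> ` (R \<omega> \<inter> (lines \<times> UNIV))"

lemma inj_on_move_road:
  assumes a: "tree_aut \<psi>"
  shows "inj_on (move_road \<psi>) (lines \<times> UNIV)"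
proof (rule inj_onI)
  fix p p' assume p: "p \<in> lines \<times> UNIV" "p' \<in> lines \<times> UNIV" "move_road \<psi> p = move_road \<psi> p'"
  obtain l v l' v' where lv: "p = (l, v)" "p' = (l', v')"
    by (cases p, cases p')
  then have "\<psi> ` l = \<psi> ` l'" "v = v'"
    using p(3) unfolding move_road_def by auto
  moreover have "l \<in> Pow TV" "l' \<in> Pow TV"
    using p lv lines_subset_TV by auto
  moreover have "inj_on (image \<psi>) (Pow TV)"
    using a unfolding tree_aut_def bij_betw_def by (simp add: inj_on_image_Pow)
  ultimately show "p = p'"
    using lv by (metis inj_onD)
qed

lemma moved_roads_Int:
  assumes "tree_aut \<psi>"
  shows "moved_roads \<psi> R \<omega> \<inter> A = move_road \<psi> ` (R \<omega> \<inter> (move_road \<psi> -` A \<inter> (lines \<times> UNIV)))"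
    and "inj_on (move_road \<psi>) (R \<omega> \<inter> (move_road \<psi> -` A \<inter> (lines \<times> UNIV)))"
  unfolding moved_roads_def by (auto intro: inj_on_subset[OF inj_on_move_road[OF assms]])

lemma poisson_process_moved_roads:
  assumes lm: "line_measure \<mu>" and a: "tree_aut \<psi>" and pp: "poisson_process M (road_intensity \<mu> \<beta>) R"
  shows "poisson_process M (road_intensity \<mu> \<beta>) (moved_roads \<psi> R)"
proof -
  let ?I = "road_intensity \<mu> \<beta>"
  let ?P = "\<lambda>A. move_road \<psi> -` A \<inter> (lines \<times> UNIV)"
  have counts: "card (moved_roads \<psi> R \<omega> \<inter> A) = card (R \<omega> \<inter> ?P A)" for \<omega> A
    unfolding moved_roads_Int(1)[OF a] by (rule card_image[OF moved_roads_Int(2)[OF a]])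
  have finite: "finite (moved_roads \<psi> R \<omega> \<inter> A) \<longleftrightarrow> finite (R \<omega> \<inter> ?P A)" for \<omega> A
    unfolding moved_roads_Int(1)[OF a] by (rule finite_image_iff[OF moved_roads_Int(2)[OF a]])
  have P: "?P A \<in> sets ?I" "emeasure ?I (?P A) = emeasure ?I A" "measure ?I (?P A) = measure ?I A"
    if "A \<in> sets ?I" for A
    using move_road_vimage_sets[OF lm a that] emeasure_road_intensity_vimage_move_road[OF lm a that]
    by (simp_all add: measure_def)
  have space: "\<forall>\<omega>\<in>space M. moved_roads \<psi> R \<omega> \<subseteq> space ?I"
    using tree_aut_image_line[OF a] space_road_intensity[OF lm]
    unfolding moved_roads_def move_road_def by auto
  have law: "(AE \<omega> in M. finite (moved_roads \<psi> R \<omega> \<inter> A)) \<and>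
      (\<forall>k::nat. measure M {\<omega> \<in> space M. card (moved_roads \<psi> R \<omega> \<inter> A) = k} =
        exp (- measure ?I A) * measure ?I A ^ k / fact k)"
    if "A \<in> sets ?I" "emeasure ?I A < \<infinity>" for A
    using poisson_process_AE_finite[OF pp] poisson_process_count_prob[OF pp] P[OF that(1)] that
    by (simp add: counts finite)
  have indep: "prob_space.indep_vars M (\<lambda>_. nat_count) (\<lambda>i \<omega>. card (moved_roads \<psi> R \<omega> \<inter> A i)) {..<n}"
    if "\<forall>i<n. A i \<in> sets ?I \<and> emeasure ?I (A i) < \<infinity>"
      and "\<forall>i<n. \<forall>j<n. i \<noteq> j \<longrightarrow> A i \<inter> A j = {}" for n :: nat and A :: "nat \<Rightarrow> _"
  proof -
    have "\<forall>i<n. \<forall>j<n. i \<noteq> j \<longrightarrow> ?P (A i) \<inter> ?P (A j) = {}"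
      using that(2) by blast
    then show ?thesis
      using poisson_process_indep_counts[OF pp, of n "\<lambda>i. ?P (A i)"] P that by (simp add: counts)
  qed
  show ?thesis
    unfolding poisson_process_def
    using poisson_process_prob_space[OF pp] space law indep by simp
qed

lemma moved_roads_pos:
  assumes pos: "\<forall>\<omega>\<in>space M. R \<omega> \<subseteq> lines \<times> {0<..}" and a: "tree_aut \<psi>"
  shows "\<forall>\<omega>\<in>space M. moved_roads \<psi> R \<omega> \<subseteq> lines \<times> {0<..}"
proof (intro ballI subsetI)
  fix \<omega> r assume "\<omega> \<in> space M" "r \<in> moved_roads \<psi> R \<omega>"
  then obtain l v where "(l, v) \<in> R \<omega>" "r = (\<psi> ` l, v)"
    unfolding moved_roads_def move_road_def by auto
  then show "r \<in> lines \<times> {0<..}"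
    using pos \<open>\<omega> \<in> space M\<close> tree_aut_image_line[OF a] by auto
qed

lemma edge_speed_moved_roads:
  assumes a: "tree_aut \<psi>" and R: "R \<omega> \<subseteq> lines \<times> UNIV" and xy: "x \<in> TV" "y \<in> TV"
  shows "edge_speed (moved_roads \<psi> R) \<omega> {\<psi> x, \<psi> y} = edge_speed R \<omega> {x, y}"
proof -
  have through: "{\<psi> x, \<psi> y} \<subseteq> \<psi> ` l \<longleftrightarrow> {x, y} \<subseteq> l" if "l \<in> lines" for l
    using tree_aut_image_mem_iff[OF a lines_subset_TV[OF that]] xy by simp
  have "{r \<in> moved_roads \<psi> R \<omega>. {\<psi> x, \<psi> y} \<subseteq> fst r} = move_road \<psi> ` {r \<in> R \<omega>. {x, y} \<subseteq> fst r}"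
  proof (intro equalityI subsetI)
    fix r assume "r \<in> {r \<in> moved_roads \<psi> R \<omega>. {\<psi> x, \<psi> y} \<subseteq> fst r}"
    then obtain l v where "(l, v) \<in> R \<omega>" "r = (\<psi> ` l, v)" "{\<psi> x, \<psi> y} \<subseteq> \<psi> ` l"
      unfolding moved_roads_def move_road_def by auto
    then show "r \<in> move_road \<psi> ` {r \<in> R \<omega>. {x, y} \<subseteq> fst r}"
      using R through unfolding move_road_def by force
  next
    fix r assume "r \<in> move_road \<psi> ` {r \<in> R \<omega>. {x, y} \<subseteq> fst r}"
    then obtain l v where "(l, v) \<in> R \<omega>" "r = (\<psi> ` l, v)" "{x, y} \<subseteq> l"
      unfolding move_road_def by auto
    then show "r \<in> {r \<in> moved_roads \<psi> R \<omega>. {\<psi> x, \<psi> y} \<subseteq> fst r}"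
      using R unfolding moved_roads_def move_road_def by force
  qed
  then show ?thesis
    unfolding edge_speed_def by (simp add: image_image move_road_def split_beta)
qed

section \<open>Driving times are determined by countably many road counts\<close>

lemma SUP_ennreal_eq_SUP_rat:
  fixes S :: "real set"
  assumes "S \<subseteq> {0<..}"
  shows "(SUP s\<in>S. ennreal s) =
         (SUP q\<in>{q::rat. 0 < q}. if \<exists>s\<in>S. real_of_rat q < s then ennreal (real_of_rat q) else 0)"
proof (rule antisym)
  show "(SUP s\<in>S. ennreal s) \<le>
        (SUP q\<in>{q::rat. 0 < q}. if \<exists>s\<in>S. real_of_rat q < s then ennreal (real_of_rat q) else 0)"
  proof (rule SUP_least, unfold le_SUP_iff, intro allI impI)
    fix s y assume "s \<in> S" and "y < ennreal s"
    then obtain y' where y': "0 \<le> y'" "y = ennreal y'" "y' < s"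
      by (cases y) (auto simp: ennreal_less_iff)
    then obtain q :: rat where q: "y' < real_of_rat q" "real_of_rat q < s"
      using Rats_dense_in_real[of y' s] by (auto simp: Rats_def)
    then have "0 < real_of_rat q"
      using \<open>0 \<le> y'\<close> by linarith
    then have "0 < q"
      by simp
    with q show "\<exists>q\<in>{q::rat. 0 < q}.
        y < (if \<exists>s\<in>S. real_of_rat q < s then ennreal (real_of_rat q) else 0)"
      using \<open>s \<in> S\<close> y' by (intro bexI[of _ q]) (auto simp: ennreal_less_iff)
  qed
  show "(SUP q\<in>{q::rat. 0 < q}. if \<exists>s\<in>S. real_of_rat q < s then ennreal (real_of_rat q) else 0) \<le>
        (SUP s\<in>S. ennreal s)"
  proof (rule SUP_least)
    fix q :: rat
    show "(if \<exists>s\<in>S. real_of_rat q < s then ennreal (real_of_rat q) else 0) \<le> (SUP s\<in>S. ennreal s)"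
    proof (cases "\<exists>s\<in>S. real_of_rat q < s")
      case True
      then obtain s where "s \<in> S" "real_of_rat q < s"
        by blast
      then have "ennreal (real_of_rat q) \<le> ennreal s"
        by (intro ennreal_leI) simp
      also have "\<dots> \<le> (SUP s\<in>S. ennreal s)"
        using \<open>s \<in> S\<close> by (rule SUP_upper)
      finally show ?thesis
        using True by simp
    qed simp
  qed
qed

definition edge_index :: "(nat list \<times> rat) set" where
  "edge_index = {(w, q). w \<noteq> [] \<and> 0 < q}"

definition indexed_edge_roads :: "nat list \<times> rat \<Rightarrow> (nat list set \<times> real) set" where
  "indexed_edge_roads j = fast_edge_roads (fst j) (real_of_rat (snd j))"

definition road_counts :: "('w \<Rightarrow> (nat list set \<times> real) set) \<Rightarrow> 'w \<Rightarrow> nat list \<times> rat \<Rightarrow> nat" where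
  "road_counts R \<omega> = (\<lambda>j\<in>edge_index. card (R \<omega> \<inter> indexed_edge_roads j))"

text \<open>The speed of the edge ending in \<open>w\<close> is the supremum of the rationals \<open>q\<close> such that
  some road through that edge is faster than \<open>q\<close>.\<close>

definition speed_from_counts :: "(nat list \<times> rat \<Rightarrow> nat) \<Rightarrow> nat list \<Rightarrow> ennreal" where
  "speed_from_counts c w = (SUP q\<in>{q::rat. 0 < q}. if 1 \<le> c (w, q) then ennreal (real_of_rat q) else 0)"

definition locally_finite_roads :: "('w \<Rightarrow> (nat list set \<times> real) set) \<Rightarrow> 'w \<Rightarrow> bool" where
  "locally_finite_roads R \<omega> \<longleftrightarrow>
     R \<omega> \<subseteq> lines \<times> {0<..} \<and> (\<forall>j\<in>edge_index. finite (R \<omega> \<inter> indexed_edge_roads j))"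

lemma edge_speed_eq_speed_from_counts:
  assumes lf: "locally_finite_roads R \<omega>" and "w \<noteq> []"
  shows "edge_speed R \<omega> {butlast w, w} = speed_from_counts (road_counts R \<omega>) w"
proof -
  define S where "S = snd ` {r \<in> R \<omega>. {butlast w, w} \<subseteq> fst r}"
  have R: "R \<omega> \<subseteq> lines \<times> {0<..}"
    using lf unfolding locally_finite_roads_def by simp
  have "1 \<le> road_counts R \<omega> (w, q) \<longleftrightarrow> (\<exists>s\<in>S. real_of_rat q < s)" if "0 < q" for q
  proof -
    have j: "(w, q) \<in> edge_index"
      using \<open>w \<noteq> []\<close> that unfolding edge_index_def by simp
    then have "1 \<le> road_counts R \<omega> (w, q) \<longleftrightarrow> R \<omega> \<inter> indexed_edge_roads (w, q) \<noteq> {}"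
      using lf unfolding road_counts_def locally_finite_roads_def by (auto simp: Suc_le_eq card_gt_0_iff)
    also have "\<dots> \<longleftrightarrow> (\<exists>s\<in>S. real_of_rat q < s)"
      using R unfolding S_def indexed_edge_roads_def fast_edge_roads_def edge_lines_def by force
    finally show ?thesis .
  qed
  then have "speed_from_counts (road_counts R \<omega>) w =
      (SUP q\<in>{q::rat. 0 < q}. if \<exists>s\<in>S. real_of_rat q < s then ennreal (real_of_rat q) else 0)"
    unfolding speed_from_counts_def by (intro SUP_cong) auto
  also have "\<dots> = (SUP s\<in>S. ennreal s)"
    using R by (intro SUP_ennreal_eq_SUP_rat[symmetric]) (auto simp: S_def)
  finally show ?thesis
    unfolding edge_speed_def S_def by (simp add: image_image)
qed

definition count_ball :: "real \<Rightarrow> (nat list \<times> rat \<Rightarrow> nat) \<Rightarrow> nat list set" where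
  "count_ball t c = {x \<in> TV. (\<Sum>k<length x. inverse (speed_from_counts c (take (Suc k) x))) \<le> ennreal t}"

lemma drive_ball_eq_count_ball:
  assumes "locally_finite_roads R \<omega>"
  shows "{x \<in> TV. drive_time R \<omega> troot x \<le> ennreal t} = count_ball t (road_counts R \<omega>)"
proof -
  have "edge_speed R \<omega> {take k x, take (Suc k) x} = speed_from_counts (road_counts R \<omega>) (take (Suc k) x)"
    if "k < length x" for x k
  proof -
    have "butlast (take (Suc k) x) = take k x" "take (Suc k) x \<noteq> []"
      using that by (auto simp: butlast_take)
    then show ?thesis
      using edge_speed_eq_speed_from_counts[OF assms, of "take (Suc k) x"] by simp
  qed
  then have "drive_time R \<omega> troot x =
      (\<Sum>k<length x. inverse (speed_from_counts (road_counts R \<omega>) (take (Suc k) x)))" for x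
    unfolding troot_def drive_time_Nil by (intro sum.cong) auto
  then show ?thesis
    unfolding count_ball_def by simp
qed

lemma finite_TV_iff_length_bounded:
  "finite {x \<in> TV. P x} \<longleftrightarrow> (\<exists>n::nat. \<forall>x. x \<in> TV \<longrightarrow> P x \<longrightarrow> length x < n)"
proof
  assume "finite {x \<in> TV. P x}"
  then show "\<exists>n::nat. \<forall>x. x \<in> TV \<longrightarrow> P x \<longrightarrow> length x < n"
    using finite_nat_set_iff_bounded[of "length ` {x \<in> TV. P x}"] by auto
next
  assume "\<exists>n::nat. \<forall>x. x \<in> TV \<longrightarrow> P x \<longrightarrow> length x < n"
  then obtain n where "\<forall>x. x \<in> TV \<longrightarrow> P x \<longrightarrow> length x < n"
    by blast
  then have "{x \<in> TV. P x} \<subseteq> {xs. set xs \<subseteq> {0,1,2} \<and> length xs \<le> n}"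
    by (auto simp: TV_def less_imp_le)
  then show "finite {x \<in> TV. P x}"
    using finite_lists_length_le[of "{0::nat,1,2}" n] finite_subset by blast
qed

abbreviation road_count_space :: "(nat list \<times> rat \<Rightarrow> nat) measure" where
  "road_count_space \<equiv> PiM edge_index (\<lambda>_. nat_count)"

lemma speed_from_counts_measurable:
  assumes "w \<noteq> []"
  shows "(\<lambda>c. speed_from_counts c w) \<in> borel_measurable road_count_space"
proof -
  have "(\<lambda>c. c (w, q)) \<in> measurable road_count_space nat_count" if "0 < q" for q
    using assms that by (intro measurable_component_singleton) (simp add: edge_index_def)
  then have "{c \<in> space road_count_space. 1 \<le> c (w, q)} \<in> sets road_count_space" if "0 < q" for q
    using that by measurable
  then show ?thesis
    unfolding speed_from_counts_def by (intro borel_measurable_SUP measurable_If) auto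
qed

lemma finite_count_ball_sets: "{c \<in> space road_count_space. finite (count_ball t c)} \<in> sets road_count_space"
proof -
  have "(\<lambda>c. \<Sum>k<length x. inverse (speed_from_counts c (take (Suc k) x))) \<in> borel_measurable road_count_space"
    for x :: "nat list"
    by (intro borel_measurable_sum borel_measurable_inverse_ennreal speed_from_counts_measurable) auto
  then have "{c \<in> space road_count_space.
      (\<Sum>k<length x. inverse (speed_from_counts c (take (Suc k) x))) \<le> ennreal t} \<in> sets road_count_space"
    for x :: "nat list"
    by measurable
  then show ?thesis
    unfolding count_ball_def finite_TV_iff_length_bounded
    by (intro sets.sets_Collect_countable_Ex sets.sets_Collect_countable_All sets.sets_Collect_imp
        sets.sets_Collect_const) auto
qed

lemma indexed_edge_roads_finite:
  assumes "line_measure \<mu>" and "\<beta> > 1" and "j \<in> edge_index"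
  shows "indexed_edge_roads j \<in> sets (road_intensity \<mu> \<beta>) \<and>
         emeasure (road_intensity \<mu> \<beta>) (indexed_edge_roads j) < \<infinity>"
  using assms fast_edge_roads_sets emeasure_fast_edge_roads_finite
  unfolding edge_index_def indexed_edge_roads_def by auto

lemma road_counts_measurable:
  assumes "line_measure \<mu>" and "\<beta> > 1" and pp: "poisson_process M (road_intensity \<mu> \<beta>) R"
  shows "road_counts R \<in> measurable M road_count_space"
  unfolding road_counts_def
  using poisson_process_count_measurable[OF pp] indexed_edge_roads_finite[OF assms(1,2)]
  by (intro measurable_restrict) auto

lemma AE_locally_finite_roads:
  assumes "line_measure \<mu>" and "\<beta> > 1" and pp: "poisson_process M (road_intensity \<mu> \<beta>) R"
    and pos: "\<forall>\<omega>\<in>space M. R \<omega> \<subseteq> lines \<times> {0<..}"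
  shows "AE \<omega> in M. locally_finite_roads R \<omega>"
proof -
  have "countable edge_index"
    by (rule countable_subset[of _ UNIV]) auto
  then have "AE \<omega> in M. \<forall>j\<in>edge_index. finite (R \<omega> \<inter> indexed_edge_roads j)"
    using indexed_edge_roads_finite[OF assms(1,2)] poisson_process_AE_finite[OF pp]
    by (subst AE_ball_countable) auto
  moreover have "AE \<omega> in M. R \<omega> \<subseteq> lines \<times> {0<..}"
    using pos by (intro AE_I2) auto
  ultimately show ?thesis
    unfolding locally_finite_roads_def by eventually_elim auto
qed

lemma AE_finite_drive_ball_transfer:
  assumes lm: "line_measure \<mu>" and b: "\<beta> > 1"
    and ppR: "poisson_process M (road_intensity \<mu> \<beta>) R"
    and ppQ: "poisson_process M (road_intensity \<mu> \<beta>) Q"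
    and posR: "\<forall>\<omega>\<in>space M. R \<omega> \<subseteq> lines \<times> {0<..}"
    and posQ: "\<forall>\<omega>\<in>space M. Q \<omega> \<subseteq> lines \<times> {0<..}"
    and ball: "AE \<omega> in M. finite {x \<in> TV. drive_time R \<omega> troot x \<le> ennreal t}"
  shows "AE \<omega> in M. finite {x \<in> TV. drive_time Q \<omega> troot x \<le> ennreal t}"
proof -
  have event_iff: "finite {x \<in> TV. drive_time Z \<omega> troot x \<le> ennreal t} \<longleftrightarrow>
      finite (count_ball t (road_counts Z \<omega>))" if "locally_finite_roads Z \<omega>" for Z \<omega>
    by (simp add: drive_ball_eq_count_ball[OF that])
  have "AE \<omega> in M. finite (count_ball t (road_counts R \<omega>))"
    using ball AE_locally_finite_roads[OF lm b ppR posR] by eventually_elim (simp add: event_iff)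
  then have "AE c in distr M road_count_space (road_counts R). finite (count_ball t c)"
    by (simp add: AE_distr_iff[OF road_counts_measurable[OF lm b ppR] finite_count_ball_sets])
  also have "distr M road_count_space (road_counts R) = distr M road_count_space (road_counts Q)"
    unfolding road_counts_def
    using indexed_edge_roads_finite[OF lm b] by (intro poisson_processes_counts_distr_eq[OF ppR ppQ]) auto
  finally have "AE \<omega> in M. finite (count_ball t (road_counts Q \<omega>))"
    by (simp add: AE_distr_iff[OF road_counts_measurable[OF lm b ppQ] finite_count_ball_sets])
  then show ?thesis
    using AE_locally_finite_roads[OF lm b ppQ posQ] by eventually_elim (simp add: event_iff)
qed

section \<open>Rays of finite driving time\<close>

lemma ennreal_suminf_tail_le:
  fixes d :: "nat \<Rightarrow> ennreal"
  assumes fin: "(\<Sum>n. d n) \<noteq> \<infinity>" and "0 < t"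
  obtains N where "\<And>j. (\<Sum>k<j. d (k + N)) \<le> ennreal t"
proof -
  have d_fin: "d n \<noteq> \<infinity>" for n
    using fin ennreal_suminf_lessD[of d "\<infinity>"] by (auto simp: top.not_eq_extremum)
  define r where "r n = enn2real (d n)" for n
  have d_eq: "d n = ennreal (r n)" for n
    using d_fin[of n] unfolding r_def by (simp add: ennreal_enn2real_if)
  have r_nonneg: "0 \<le> r n" for n
    unfolding r_def by simp
  have "summable r"
    using fin r_nonneg by (intro summable_suminf_not_top) (simp_all add: d_eq)
  then obtain N where N: "norm (\<Sum>i. r (i + N)) < t"
    using suminf_exist_split[OF \<open>0 < t\<close>] by blast
  have "(\<Sum>k<j. r (k + N)) \<le> t" for j
  proof -
    have "(\<Sum>k<j. r (k + N)) \<le> (\<Sum>i. r (i + N))"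
      using \<open>summable r\<close> r_nonneg by (intro sum_le_suminf) (auto simp: summable_iff_shift)
    then show ?thesis
      using N by simp
  qed
  then show ?thesis
    using r_nonneg by (intro that[of N]) (simp add: d_eq ennreal_leI)
qed

lemma drive_time_moved_root_ray:
  assumes r: "root_ray x" and R: "R \<omega> \<subseteq> lines \<times> UNIV" and "N \<le> m"
  shows "drive_time (moved_roads (left_mult_word (rev (x N))) R) \<omega> troot (drop N (x m)) =
         (\<Sum>k<m - N. drive_time R \<omega> (x (k + N)) (x (Suc (k + N))))"
proof -
  define \<psi> where "\<psi> = left_mult_word (rev (x N))"
  have a: "tree_aut \<psi>"
    unfolding \<psi>_def using TV_letters[OF root_ray_TV[OF r]] by (intro tree_aut_left_mult_word) auto
  have xk: "x (N + k) = x N @ take k (drop N (x m))" if "k \<le> m - N" for k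
    using root_ray_take[OF r] that \<open>N \<le> m\<close> length_root_ray[OF r, of N]
    by (metis add.commute le_diff_conv2 take_add take_take)
  have moved: "\<psi> (x (N + k)) = take k (drop N (x m))" if "k \<le> m - N" for k
    unfolding \<psi>_def using left_mult_word_rev_prefix root_ray_TV[OF r, of "N + k"] xk[OF that] by metis
  have "drive_time (moved_roads \<psi> R) \<omega> troot (drop N (x m)) =
      (\<Sum>k<m - N. inverse (edge_speed (moved_roads \<psi> R) \<omega> {\<psi> (x (N + k)), \<psi> (x (Suc (N + k)))}))"
    unfolding troot_def drive_time_Nil length_drop length_root_ray[OF r]
  proof (rule sum.cong)
    fix k assume "k \<in> {..<m - N}"
    then show "inverse (edge_speed (moved_roads \<psi> R) \<omega> {take k (drop N (x m)), take (Suc k) (drop N (x m))}) =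
        inverse (edge_speed (moved_roads \<psi> R) \<omega> {\<psi> (x (N + k)), \<psi> (x (Suc (N + k)))})"
      using moved[of k] moved[of "Suc k"] by simp
  qed simp
  also have "\<dots> = (\<Sum>k<m - N. drive_time R \<omega> (x (k + N)) (x (Suc (k + N))))"
    using edge_speed_moved_roads[of \<psi> R \<omega>, OF a R root_ray_TV[OF r] root_ray_TV[OF r]]
    by (simp add: drive_time_root_ray_step[OF r] add.commute)
  finally show ?thesis
    unfolding \<psi>_def .
qed

lemma infinite_drive_ball_of_finite_ray:
  assumes r: "root_ray x" and R: "R \<omega> \<subseteq> lines \<times> UNIV" and "0 < t"
    and fin: "(\<Sum>n. drive_time R \<omega> (x n) (x (Suc n))) \<noteq> \<infinity>"
  shows "\<exists>u\<in>TV. infinite {y \<in> TV. drive_time (moved_roads (left_mult_word (rev u)) R) \<omega> troot y \<le> ennreal t}"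
proof -
  obtain N where N: "\<And>j. (\<Sum>k<j. drive_time R \<omega> (x (k + N)) (x (Suc (k + N)))) \<le> ennreal t"
    using ennreal_suminf_tail_le[OF fin \<open>0 < t\<close>] by blast
  let ?ball = "{y \<in> TV. drive_time (moved_roads (left_mult_word (rev (x N))) R) \<omega> troot y \<le> ennreal t}"
  have "drop N (x m) \<in> ?ball" if "N \<le> m" for m
  proof -
    have "drop N (x m) \<in> TV"
      using TV_appendD root_ray_TV[OF r, of m] root_ray_append_drop[OF r that] by metis
    moreover have "drive_time (moved_roads (left_mult_word (rev (x N))) R) \<omega> troot (drop N (x m)) \<le> ennreal t"
      using drive_time_moved_root_ray[of x R \<omega> N m, OF r R that] N by simp
    ultimately show ?thesis
      by simp
  qed
  then have "(\<lambda>m. drop N (x m)) ` {N..} \<subseteq> ?ball"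
    by auto
  moreover have "inj_on (\<lambda>m. drop N (x m)) {N..}"
  proof (rule inj_onI)
    fix m m' assume "m \<in> {N..}" "m' \<in> {N..}" "drop N (x m) = drop N (x m')"
    then have "m - N = m' - N"
      using length_root_ray[OF r] by (metis length_drop)
    then show "m = m'"
      using \<open>m \<in> {N..}\<close> \<open>m' \<in> {N..}\<close> by auto
  qed
  then have "infinite ((\<lambda>m. drop N (x m)) ` {N..})"
    using infinite_Ici[of N] by (simp add: finite_image_iff)
  ultimately show ?thesis
    using root_ray_TV[OF r, of N] finite_subset by blast
qed

lemma AE_finite_moved_drive_balls:
  assumes b: "\<beta> > 1" and lm: "line_measure \<mu>" and pp: "poisson_process M (road_intensity \<mu> \<beta>) R"
    and pos: "\<forall>\<omega>\<in>space M. R \<omega> \<subseteq> lines \<times> {0<..}"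
    and ball: "AE \<omega> in M. finite {x \<in> TV. drive_time R \<omega> troot x \<le> ennreal t}"
  shows "AE \<omega> in M. \<forall>u\<in>TV.
           finite {y \<in> TV. drive_time (moved_roads (left_mult_word (rev u)) R) \<omega> troot y \<le> ennreal t}"
proof -
  have "AE \<omega> in M. finite {y \<in> TV. drive_time (moved_roads (left_mult_word (rev u)) R) \<omega> troot y \<le> ennreal t}"
    if "u \<in> TV" for u
  proof -
    have a: "tree_aut (left_mult_word (rev u))"
      using TV_letters[OF that] by (intro tree_aut_left_mult_word) auto
    show ?thesis
      by (rule AE_finite_drive_ball_transfer[OF lm b pp poisson_process_moved_roads[OF lm a pp]
          pos moved_roads_pos[OF pos a] ball])
  qed
  then show ?thesis
    by (subst AE_ball_countable) (simp_all add: countable_subset[of _ UNIV])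
qed

theorem mainTheorem8:
  fixes M :: "'w measure" and Roads :: "'w \<Rightarrow> (nat list set \<times> real) set"
    and \<mu> :: "nat list set measure" and \<beta> :: real
  assumes "\<beta> > 1"
    and "line_measure \<mu>"
    and "poisson_process M (road_intensity \<mu> \<beta>) Roads"
    and "\<forall>\<omega>\<in>space M. Roads \<omega> \<subseteq> lines \<times> {0<..}"
    and "\<exists>t>0. AE \<omega> in M. finite {x \<in> TV. drive_time Roads \<omega> troot x \<le> ennreal t}"
  shows "AE \<omega> in M. \<forall>x. root_ray x \<longrightarrow>
           (\<Sum>n. drive_time Roads \<omega> (x n) (x (Suc n))) = \<infinity>"
proof -
  obtain t where "t > 0" and ball: "AE \<omega> in M. finite {x \<in> TV. drive_time Roads \<omega> troot x \<le> ennreal t}"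
    using assms(5) by blast
  show ?thesis
    using AE_finite_moved_drive_balls[OF assms(1-4) ball] AE_space
  proof eventually_elim
    case (elim \<omega>)
    then have "Roads \<omega> \<subseteq> lines \<times> UNIV"
      using assms(4) by auto
    then show ?case
      using elim(1) infinite_drive_ball_of_finite_ray[of _ Roads \<omega> t, OF _ _ \<open>t > 0\<close>] by auto
  qed
qed

end
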